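(* Let $n\in\mathbb{N}_+$, $i\in\{0,\dots,n\}$ and let $l$ be a positive integer. Then $$\|B_n^l e_{i+1}\|_1=\begin{cases}\Big(\sum_{j=0}^{i}\binom{n}{j}\Big)^l & \text{if } i\le\lfloor n/2\rfloor,\\[4pt] \Big(\sum_{j=0}^{\lfloor n/2\rfloor}\binom{n}{j}\Big)^l+l\sum_{s=\lfloor n/2\rfloor+1}^{i}\Big(\sum_{j=0}^{n-s}\binom{n}{j}\Big)^{l-1}\binom{n}{n-s} & \text{if } i>\lfloor n/2\rfloor,\end{cases}$$ where $e_{i+1}\in\mathbb{R}^{n+1}$ is the $(i+1)$-th standard unit vector.
   Context: $V$ denotes sequences $(v_j)_{j\in\mathbb{N}}$ (indexed from $0$) of nonnegative integers with finite sum; ${\rm e}_k\in V$ has $({\rm e}_k)_j=\delta_{kj}$. For $i^*\in\mathbb{N}$, the clipping $\mathrm{cl}_{i^*}:V\to V$ is $\mathrm{cl}_{i^*}(v)_i=v_i$ for $i<i^*$, $\sum_{j\ge i^*}v_j$ for $i=i^*$, $0$ for $i>i^*$. For $n\in\mathbb{N}_+$ and $k\in\{0,\dots,n\}$ let $\gamma_{k,n}=\sum_{j=0}^{k}\binom{n}{j}{\rm e}_{n-j}\in V$. The binomial bound matrix $B_n\in\mathbb{N}^{(n+1)\times(n+1)}$ is defined by $(B_n)_{a,b}=(\mathrm{cl}_{b-1}(\gamma_{b-1,n}))_{a-1}$ for $a,b\in\{1,\dots,n+1\}$. $\|\cdot\|_1$ is the sum of absolute values of entries. *)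

theory Defs
  imports Main "Jordan_Normal_Form.Matrix"
begin

text \<open>Elements of V are modelled as functions nat \<Rightarrow> nat (finitely supported where relevant).\<close>

definition ev :: "nat \<Rightarrow> nat \<Rightarrow> nat" where
  "ev k = (\<lambda>j. if j = k then 1 else 0)"

definition clip :: "nat \<Rightarrow> (nat \<Rightarrow> nat) \<Rightarrow> nat \<Rightarrow> nat" where
  "clip istar v = (\<lambda>i. if i < istar then v i
                       else if i = istar then (\<Sum>j\<in>{j. istar \<le> j \<and> v j \<noteq> 0}. v j)
                       else 0)"

definition gamma :: "nat \<Rightarrow> nat \<Rightarrow> nat \<Rightarrow> nat" where
  "gamma k n = (\<lambda>m. \<Sum>j=0..k. (n choose j) * ev (n - j) m)"

text \<open>Binomial bound matrix, 0-indexed: entry (a,b) is cl_b(gamma_{b,n})_a.\<close>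
definition binom_bound_mat :: "nat \<Rightarrow> real mat" where
  "binom_bound_mat n = mat (n + 1) (n + 1) (\<lambda>(a, b). real (clip b (gamma b n) a))"

definition norm1_vec :: "real vec \<Rightarrow> real" where
  "norm1_vec v = (\<Sum>i<dim_vec v. \<bar>v $ i\<bar>)"

end

theory Submission imports Defs begin

(* B_n is entrywise nonnegative, so the 1-norm of B_n^l e_(i+1) is the i-th column sum of B_n^l,
   and the row vector f_l of column sums satisfies f_0 = 1, f_(l+1) = f_l B_n.  With
   S k = sum_(j<=k) C(n,j), a column b <= n/2 of B_n is S b e_b, so f_l b = (S b)^l there.
   A column b > n/2 carries C(n,n-a) in the rows n-b <= a < b and S (n-b) on the diagonal.
   Passing from column b to b+1 adds the row n-b-1, where f_l = S (n-b-1)^l, and splits the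
   diagonal weight as S (n-b) = S (n-b-1) + C(n,b); hence, by induction on b, f_(l+1) grows by
   exactly (l+1) S (n-b-1)^l C(n,b+1) from one column to the next. *)

definition col_sum :: "'a :: comm_monoid_add mat \<Rightarrow> nat \<Rightarrow> 'a" where
  "col_sum A j = (\<Sum>i<dim_row A. A $$ (i, j))"

lemma mult_unit_vec_eq_col:
  assumes "(A :: 'a :: semiring_1 mat) \<in> carrier_mat nr n" and "j < n"
  shows "A *\<^sub>v unit_vec n j = col A j"
  using col_mult2[OF assms(1) one_carrier_mat assms(2)] assms
  by (simp add: col_one right_mult_one_mat)

lemma norm1_vec_col_nonneg:
  assumes "j < dim_col A" and "\<And>i. i < dim_row A \<Longrightarrow> 0 \<le> A $$ (i, j)"
  shows "norm1_vec (col A j) = col_sum A j"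
  unfolding norm1_vec_def col_sum_def using assms by (intro sum.cong) auto

lemma col_sum_one_mat: "j < n \<Longrightarrow> col_sum (1\<^sub>m n :: 'a :: semiring_1 mat) j = 1"
proof -
  assume "j < n"
  then have "col_sum (1\<^sub>m n :: 'a mat) j = (\<Sum>i<n. if i = j then 1 else 0)"
    unfolding col_sum_def by (intro sum.cong) auto
  with \<open>j < n\<close> show ?thesis by simp
qed

lemma col_sum_mult:
  assumes "A \<in> carrier_mat nr n" and "B \<in> carrier_mat n nc" and "j < nc"
  shows "col_sum (A * B) j = (\<Sum>k<n. col_sum A k * B $$ (k, j))"
proof -
  have "col_sum (A * B) j = (\<Sum>i<nr. \<Sum>k<n. A $$ (i, k) * B $$ (k, j))"
    unfolding col_sum_def using assms
    by (intro sum.cong) (auto simp: scalar_prod_def atLeast0LessThan)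
  also have "\<dots> = (\<Sum>k<n. col_sum A k * B $$ (k, j))"
    unfolding col_sum_def sum_distrib_right using assms(1) by (subst sum.swap) simp
  finally show ?thesis .
qed

lemma pow_mat_nonneg:
  fixes A :: "'a :: linordered_semidom mat"
  assumes A: "A \<in> carrier_mat n n" and nonneg: "\<And>i j. i < n \<Longrightarrow> j < n \<Longrightarrow> 0 \<le> A $$ (i, j)"
  shows "i < n \<Longrightarrow> j < n \<Longrightarrow> 0 \<le> (A ^\<^sub>m l) $$ (i, j)"
proof (induction l arbitrary: i j)
  case 0
  then show ?case using A by simp
next
  case (Suc l)
  then show ?case
    using A by (auto simp: scalar_prod_def intro!: sum_nonneg mult_nonneg_nonneg nonneg Suc.IH)
qed

definition binom_prefix_sum :: "nat \<Rightarrow> nat \<Rightarrow> real" where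
  "binom_prefix_sum n k = (\<Sum>j=0..k. real (n choose j))"

lemma binom_prefix_sum_Suc:
  "binom_prefix_sum n (Suc k) = binom_prefix_sum n k + real (n choose Suc k)"
  unfolding binom_prefix_sum_def by simp

lemma gamma_apply:
  assumes "b \<le> n"
  shows "gamma b n m = (if n - b \<le> m \<and> m \<le> n then n choose (n - m) else 0)"
proof -
  have "gamma b n m = (\<Sum>j\<in>{0..b}. if j = n - m then (if m \<le> n then n choose j else 0) else 0)"
    unfolding gamma_def ev_def by (rule sum.cong) auto
  then show ?thesis using assms by (auto simp: sum.delta)
qed

lemma sum_choose_diff:
  assumes "c \<le> n"
  shows "(\<Sum>j=c..n. n choose (n - j)) = (\<Sum>k=0..n - c. n choose k)"
proof -
  have "(\<Sum>j=c..n. n choose (n - j)) = (\<Sum>j=0..n - c. n choose (n - c + 0 - j))"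
    using sum.atLeastAtMost_shift_0[of c n "\<lambda>j. n choose (n - j)"] assms
    by (simp add: add.commute)
  also have "\<dots> = (\<Sum>k=0..n - c. n choose k)"
    by (rule sum.atLeastAtMost_rev[symmetric])
  finally show ?thesis .
qed

lemma clip_gamma_diag:
  assumes "b \<le> n"
  shows "real (clip b (gamma b n) b) = binom_prefix_sum n (min b (n - b))"
proof -
  have "{j. b \<le> j \<and> gamma b n j \<noteq> 0} = {max b (n - b)..n}"
    using assms by (auto simp: gamma_apply)
  moreover have "(\<Sum>j=max b (n - b)..n. gamma b n j) = (\<Sum>j=max b (n - b)..n. n choose (n - j))"
    using assms by (intro sum.cong) (auto simp: gamma_apply)
  moreover have "n - max b (n - b) = min b (n - b)"
    by simp
  ultimately show ?thesis
    using assms sum_choose_diff[of "max b (n - b)" n]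
    by (simp add: clip_def binom_prefix_sum_def)
qed

lemma binom_bound_mat_entry:
  assumes "a \<le> n" and "b \<le> n"
  shows "binom_bound_mat n $$ (a, b) =
    (if n - b \<le> a \<and> a < b then real (n choose (n - a)) else 0)
    + (if a = b then binom_prefix_sum n (min b (n - b)) else 0)"
  using assms clip_gamma_diag[OF assms(2)]
  by (auto simp: binom_bound_mat_def clip_def gamma_apply)

lemma binom_bound_mat_carrier: "binom_bound_mat n \<in> carrier_mat (Suc n) (Suc n)"
  unfolding binom_bound_mat_def by simp

lemma binom_bound_mat_nonneg: "a < Suc n \<Longrightarrow> b < Suc n \<Longrightarrow> 0 \<le> binom_bound_mat n $$ (a, b)"
  unfolding binom_bound_mat_def by simp

definition binom_bound_row_mult :: "nat \<Rightarrow> (nat \<Rightarrow> real) \<Rightarrow> nat \<Rightarrow> real" where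
  "binom_bound_row_mult n f b =
    (\<Sum>k=n - b..<b. f k * real (n choose (n - k))) + f b * binom_prefix_sum n (min b (n - b))"

lemma sum_mult_binom_bound_mat:
  assumes "b \<le> n"
  shows "(\<Sum>k<Suc n. f k * binom_bound_mat n $$ (k, b)) = binom_bound_row_mult n f b"
proof -
  have "(\<Sum>k<Suc n. f k * binom_bound_mat n $$ (k, b)) =
      (\<Sum>k<Suc n. (if k \<in> {n - b..<b} then f k * real (n choose (n - k)) else 0)
        + (if k = b then f b * binom_prefix_sum n (min b (n - b)) else 0))"
    using assms by (intro sum.cong) (auto simp: binom_bound_mat_entry)
  also have "\<dots> = (\<Sum>k\<in>{..<Suc n} \<inter> {n - b..<b}. f k * real (n choose (n - k)))
      + f b * binom_prefix_sum n (min b (n - b))"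
    using assms by (simp add: sum.distrib sum.inter_restrict)
  also have "{..<Suc n} \<inter> {n - b..<b} = {n - b..<b}"
    using assms by auto
  finally show ?thesis unfolding binom_bound_row_mult_def .
qed

(* The minimum lets one formula cover both cases of the theorem: for b <= n div 2 the sum is empty. *)
definition binom_bound_colsum :: "nat \<Rightarrow> nat \<Rightarrow> nat \<Rightarrow> real" where
  "binom_bound_colsum n l b = binom_prefix_sum n (min b (n div 2)) ^ l
     + real l * (\<Sum>s = n div 2 + 1..b. binom_prefix_sum n (n - s) ^ (l - 1) * real (n choose (n - s)))"

lemma binom_bound_colsum_low: "b \<le> n div 2 \<Longrightarrow> binom_bound_colsum n l b = binom_prefix_sum n b ^ l"
  unfolding binom_bound_colsum_def by simp

lemma binom_bound_colsum_Suc: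
  assumes "n div 2 \<le> b"
  shows "binom_bound_colsum n l (Suc b) = binom_bound_colsum n l b
    + real l * binom_prefix_sum n (n - Suc b) ^ (l - 1) * real (n choose (n - Suc b))"
  using assms unfolding binom_bound_colsum_def by (simp add: algebra_simps)

lemma of_nat_mult_power_pred: "real l * x ^ (l - 1) * x = real l * x ^ l"
  by (cases l) auto

lemma binom_bound_colsum_recurrence_low:
  assumes "b \<le> n div 2"
  shows "binom_bound_colsum n (Suc l) b = binom_bound_row_mult n (binom_bound_colsum n l) b"
proof -
  have "min b (n - b) = b"
    using assms by simp
  with assms show ?thesis by (simp add: binom_bound_colsum_low binom_bound_row_mult_def)
qed

lemma binom_bound_colsum_recurrence_middle:
  assumes "n = 2 * b + 1"
  shows "binom_bound_colsum n (Suc l) (Suc b) = binom_bound_row_mult n (binom_bound_colsum n l) (Suc b)"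
proof -
  define S where "S = binom_prefix_sum n b"
  define c where "c = real (n choose b)"
  have h: "n div 2 = b" "n - Suc b = b" "n - b = Suc b"
    using assms by auto
  have "n choose Suc b = n choose b"
    using binomial_symmetric[of b n] assms by simp
  then have "(\<Sum>k=n - Suc b..<Suc b. binom_bound_colsum n l k * real (n choose (n - k)))
      + binom_bound_colsum n l (Suc b) * binom_prefix_sum n (min (Suc b) (n - Suc b))
      = S ^ l * c + (S ^ l + real l * S ^ (l - 1) * c) * S"
    using binom_bound_colsum_Suc[of n b l]
    by (simp add: h binom_bound_colsum_low S_def c_def)
  also have "\<dots> = S ^ Suc l + real (Suc l) * S ^ l * c"
    using of_nat_mult_power_pred[of l S] by (simp add: algebra_simps)
  also have "\<dots> = binom_bound_colsum n (Suc l) (Suc b)"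
    using binom_bound_colsum_Suc[of n b "Suc l"]
    by (simp add: h binom_bound_colsum_low S_def c_def)
  finally show ?thesis unfolding binom_bound_row_mult_def ..
qed

lemma binom_bound_colsum_recurrence_high:
  assumes "n \<le> 2 * b" and "Suc b \<le> n"
    and IH: "binom_bound_colsum n (Suc l) b = binom_bound_row_mult n (binom_bound_colsum n l) b"
  shows "binom_bound_colsum n (Suc l) (Suc b) = binom_bound_row_mult n (binom_bound_colsum n l) (Suc b)"
proof -
  let ?F = "binom_bound_colsum n l"
  define T where "T = binom_prefix_sum n (n - Suc b)"
  define c where "c = real (n choose (n - Suc b))"
  define c' where "c' = real (n choose (n - b))"
  define X where "X = (\<Sum>k=n - b..<b. ?F k * real (n choose (n - k)))"
  have b: "n div 2 \<le> b" "n - Suc b \<le> n div 2" "Suc (n - Suc b) = n - b" "n - Suc b < b"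
    using assms by auto
  have min: "min b (n - b) = n - b" "min (Suc b) (n - Suc b) = n - Suc b"
    using assms by auto
  have "n choose (n - (n - Suc b)) = n choose (n - Suc b)"
    using assms binomial_symmetric[of "Suc b" n] by simp
  then have new_rows: "(\<Sum>k=n - Suc b..<Suc b. ?F k * real (n choose (n - k))) = T ^ l * c + X + ?F b * c'"
    using b by (simp add: sum.atLeast_Suc_lessThan X_def T_def c_def c'_def binom_bound_colsum_low)
  have split_diag: "binom_prefix_sum n (n - b) = T + c'"
    unfolding T_def c'_def b(3)[symmetric] binom_prefix_sum_Suc by simp
  have F_Suc: "?F (Suc b) = ?F b + real l * T ^ (l - 1) * c"
    unfolding T_def c_def by (rule binom_bound_colsum_Suc[OF b(1)])
  have "(\<Sum>k=n - Suc b..<Suc b. ?F k * real (n choose (n - k)))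
      + ?F (Suc b) * binom_prefix_sum n (min (Suc b) (n - Suc b))
      = T ^ l * c + X + ?F b * c' + (?F b + real l * T ^ (l - 1) * c) * T"
    unfolding new_rows F_Suc min T_def ..
  also have "\<dots> = (X + ?F b * (T + c')) + real (Suc l) * T ^ l * c"
    using of_nat_mult_power_pred[of l T] by (simp add: algebra_simps)
  also have "\<dots> = binom_bound_colsum n (Suc l) b + real (Suc l) * T ^ l * c"
    unfolding IH binom_bound_row_mult_def X_def min split_diag ..
  also have "\<dots> = binom_bound_colsum n (Suc l) (Suc b)"
    unfolding T_def c_def by (simp add: binom_bound_colsum_Suc[OF b(1)])
  finally show ?thesis unfolding binom_bound_row_mult_def ..
qed

lemma binom_bound_colsum_recurrence:
  "b \<le> n \<Longrightarrow> binom_bound_colsum n (Suc l) b = binom_bound_row_mult n (binom_bound_colsum n l) b"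
proof (induction b)
  case 0
  then show ?case by (intro binom_bound_colsum_recurrence_low) simp
next
  case (Suc b)
  consider "Suc b \<le> n div 2" | "n = 2 * b + 1" | "n \<le> 2 * b"
    by linarith
  then show ?case
  proof cases
    case 1
    then show ?thesis by (rule binom_bound_colsum_recurrence_low)
  next
    case 2
    then show ?thesis by (rule binom_bound_colsum_recurrence_middle)
  next
    case 3
    then show ?thesis using Suc by (intro binom_bound_colsum_recurrence_high) auto
  qed
qed

lemma col_sum_binom_bound_mat_pow:
  "b \<le> n \<Longrightarrow> col_sum (binom_bound_mat n ^\<^sub>m l) b = binom_bound_colsum n l b"
proof (induction l arbitrary: b)
  case 0
  then show ?case
    using binom_bound_mat_carrier[of n] col_sum_one_mat[of b "Suc n"]
    by (simp add: binom_bound_colsum_def)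
next
  case (Suc l)
  have "col_sum (binom_bound_mat n ^\<^sub>m Suc l) b =
      (\<Sum>k<Suc n. binom_bound_colsum n l k * binom_bound_mat n $$ (k, b))"
    using Suc binom_bound_mat_carrier[of n]
    by (simp add: col_sum_mult[of _ "Suc n" "Suc n"])
  also have "\<dots> = binom_bound_colsum n (Suc l) b"
    using Suc.prems by (simp only: sum_mult_binom_bound_mat binom_bound_colsum_recurrence)
  finally show ?case .
qed

theorem mainTheorem10:
  fixes n i l :: nat
  assumes "0 < n" and "i \<le> n" and "0 < l"
  shows "norm1_vec ((binom_bound_mat n ^\<^sub>m l) *\<^sub>v unit_vec (n + 1) i) =
    (if i \<le> n div 2 then (\<Sum>j=0..i. real (n choose j)) ^ l
     else (\<Sum>j=0..n div 2. real (n choose j)) ^ l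
          + real l * (\<Sum>s=n div 2 + 1..i. (\<Sum>j=0..n - s. real (n choose j)) ^ (l - 1)
                                              * real (n choose (n - s))))"
proof -
  let ?P = "binom_bound_mat n ^\<^sub>m l"
  have P: "?P \<in> carrier_mat (Suc n) (Suc n)"
    using binom_bound_mat_carrier by (rule pow_carrier_mat)
  have "norm1_vec (?P *\<^sub>v unit_vec (Suc n) i) = norm1_vec (col ?P i)"
    using P assms(2) by (simp add: mult_unit_vec_eq_col)
  also have "\<dots> = col_sum ?P i"
    using P assms(2)
    by (intro norm1_vec_col_nonneg pow_mat_nonneg[OF binom_bound_mat_carrier binom_bound_mat_nonneg]) auto
  also have "\<dots> = binom_bound_colsum n l i"
    using assms(2) by (rule col_sum_binom_bound_mat_pow)
  finally show ?thesis
    by (simp add: binom_bound_colsum_def binom_prefix_sum_def)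
qed

end
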